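(* For any ideal $\mathcal{I}$ the following are equivalent: (i) $\mathcal{BI}\not\leq_K\mathcal{I}$; (ii) $\mathcal{BI}\not\leq_{KB}\mathcal{I}$; (iii) $\mathcal{BI}\not\sqsubseteq\mathcal{I}$; (iv) for every partition $(X_{(i,j)})_{(i,j)\in\omega^2}$ of $\bigcup\mathcal{I}$ into sets belonging to $\mathcal{I}$ there is $A\notin\mathcal{I}$ such that $A\cap X_{(i,j)}$ is finite for all $(i,j)\in\omega^2$ and $A\cap\bigcup_{j}X_{(i,j)}$ is finite for all but finitely many $i\in\omega$; (v) for every $f:\bigcup\mathcal{I}\to\omega^2$ there is $A\notin\mathcal{I}$ such that $f[A]\in\mathrm{Fin}^2$ and $f|A$ is either constant or finite-to-one.
   Context: An ideal on an infinite countable set $X$ is a family $\mathcal{I}\subseteq\mathcal{P}(X)$ closed under subsets and finite unions, containing all finite subsets, with $X\notin\mathcal{I}$; $\bigcup\mathcal{I}=X$. Partitions may have empty pieces. $\mathrm{Fin}^2$: ideal on $\omega^2$ of all $A$ with only finitely many $n$ such that $\{m:(n,m)\in A\}$ is infinite. $\mathcal{BI}$: ideal on $\omega^3$ of all $A$ for which there is $k$ with $\{(j,l):(i,j,l)\in A\}\in\mathrm{Fin}^2$ for $i<k$ and finite for $i\ge k$. For ideals $\mathcal{I},\mathcal{J}$: $\mathcal{I}\leq_K\mathcal{J}$ if there is a function $f:\bigcup\mathcal{J}\to\bigcup\mathcal{I}$ with $f^{-1}[A]\in\mathcal{J}$ for all $A\in\mathcal{I}$; $\mathcal{I}\leq_{KB}\mathcal{J}$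 if such an $f$ can be chosen finite-to-one; $\mathcal{I}\sqsubseteq\mathcal{J}$ if such an $f$ can be chosen bijective. *)

theory Defs
  imports Main "HOL-Library.Countable_Set"
begin

definition is_ideal :: "'a set set \<Rightarrow> bool" where
  "is_ideal I \<longleftrightarrow>
     countable (\<Union>I) \<and> infinite (\<Union>I) \<and>
     (\<forall>A\<in>I. \<forall>B. B \<subseteq> A \<longrightarrow> B \<in> I) \<and>
     (\<forall>A\<in>I. \<forall>B\<in>I. A \<union> B \<in> I) \<and>
     (\<forall>A. A \<subseteq> \<Union>I \<and> finite A \<longrightarrow> A \<in> I) \<and>
     \<Union>I \<notin> I"

definition Fin2 :: "(nat \<times> nat) set set" where
  "Fin2 = {A. finite {n. infinite {m. (n, m) \<in> A}}}"

definition BI :: "(nat \<times> nat \<times> nat) set set" where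
  "BI = {A. \<exists>k. (\<forall>i<k. {(j, l). (i, j, l) \<in> A} \<in> Fin2) \<and>
                 (\<forall>i\<ge>k. finite {(j, l). (i, j, l) \<in> A})}"

definition katetov_witness :: "('b \<Rightarrow> 'a) \<Rightarrow> 'a set set \<Rightarrow> 'b set set \<Rightarrow> bool" where
  "katetov_witness f I J \<longleftrightarrow>
     f ` (\<Union>J) \<subseteq> \<Union>I \<and> (\<forall>A\<in>I. {x \<in> \<Union>J. f x \<in> A} \<in> J)"

definition katetov_le :: "'a set set \<Rightarrow> 'b set set \<Rightarrow> bool" where
  "katetov_le I J \<longleftrightarrow> (\<exists>f. katetov_witness f I J)"

definition katetov_blass_le :: "'a set set \<Rightarrow> 'b set set \<Rightarrow> bool" where
  "katetov_blass_le I J \<longleftrightarrow>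
     (\<exists>f. katetov_witness f I J \<and> (\<forall>y. finite {x \<in> \<Union>J. f x = y}))"

definition bij_katetov_le :: "'a set set \<Rightarrow> 'b set set \<Rightarrow> bool" where
  "bij_katetov_le I J \<longleftrightarrow>
     (\<exists>f. katetov_witness f I J \<and> bij_betw f (\<Union>J) (\<Union>I))"

end

(*
  For a Katetov reduction f of BI to I, the first two coordinates pi = BI_proj o f have all
  fibres in I, and every set meeting each fibre finitely and only finitely many rows
  {x. fst (pi x) = i} infinitely lies in I, because its image lies in BI. Conversely, given such
  a pi, pairing it with an injection of the underlying set into omega yields an injective
  reduction: a member of BI has only finitely many infinite columns {(i, j)} x omega, whose
  preimages are fibres of pi, and off these columns its preimage is small. Injective reductions
  are finite-to-one, and they become bijective after being redefined on an infinite member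
  of I. Such a member exists, since otherwise every row, and then the whole underlying set,
  would be small. Conditions (iv) and (v) say that no such pi exists, with a partition read
  as the fibres of its index map.
*)
theory Submission
  imports Defs
begin

lemma ideal_subset: "is_ideal I \<Longrightarrow> A \<in> I \<Longrightarrow> B \<subseteq> A \<Longrightarrow> B \<in> I"
  unfolding is_ideal_def by blast

lemma ideal_Un: "is_ideal I \<Longrightarrow> A \<in> I \<Longrightarrow> B \<in> I \<Longrightarrow> A \<union> B \<in> I"
  unfolding is_ideal_def by blast

lemma ideal_finite: "is_ideal I \<Longrightarrow> A \<subseteq> \<Union>I \<Longrightarrow> finite A \<Longrightarrow> A \<in> I"
  unfolding is_ideal_def by blast

lemma ideal_Union_notin: "is_ideal I \<Longrightarrow> \<Union>I \<notin> I"
  unfolding is_ideal_def by blast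

lemma ideal_countable_Union: "is_ideal I \<Longrightarrow> countable (\<Union>I)"
  unfolding is_ideal_def by blast

lemma ideal_UN_finite:
  assumes "is_ideal I" "finite F" "\<And>p. p \<in> F \<Longrightarrow> X p \<in> I"
  shows "(\<Union>p\<in>F. X p) \<in> I"
  using assms(2,3)
proof (induction F rule: finite_induct)
  case empty
  then show ?case using ideal_finite[OF assms(1)] by simp
next
  case (insert a F)
  then show ?case using ideal_Un[OF assms(1)] by simp
qed

section \<open>The ideals Fin2 and BI\<close>

lemma finite_in_Fin2: "finite S \<Longrightarrow> S \<in> Fin2"
proof -
  assume "finite S"
  then have "finite {m. (n, m) \<in> S}" for n
    by (rule finite_subset[rotated, OF finite_imageI[of _ snd]]) force
  then show "S \<in> Fin2" unfolding Fin2_def by simp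
qed

lemma mem_BI_iff:
  "B \<in> BI \<longleftrightarrow> (\<forall>i. {(j, l). (i, j, l) \<in> B} \<in> Fin2) \<and> finite {i. infinite {(j, l). (i, j, l) \<in> B}}"
proof
  assume "B \<in> BI"
  then obtain k where below: "\<forall>i<k. {(j, l). (i, j, l) \<in> B} \<in> Fin2"
    and above: "\<forall>i\<ge>k. finite {(j, l). (i, j, l) \<in> B}"
    unfolding BI_def by blast
  have "{i. infinite {(j, l). (i, j, l) \<in> B}} \<subseteq> {..<k}"
    using above by (auto simp: not_le[symmetric])
  then show "(\<forall>i. {(j, l). (i, j, l) \<in> B} \<in> Fin2) \<and> finite {i. infinite {(j, l). (i, j, l) \<in> B}}"
    using below above finite_in_Fin2 by (metis finite_lessThan finite_subset not_less)
next
  assume sections: "(\<forall>i. {(j, l). (i, j, l) \<in> B} \<in> Fin2) \<and> finite {i. infinite {(j, l). (i, j, l) \<in> B}}"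
  then obtain k where "{i. infinite {(j, l). (i, j, l) \<in> B}} \<subseteq> {..<k}"
    using finite_nat_bounded by blast
  then have "\<forall>i\<ge>k. finite {(j, l). (i, j, l) \<in> B}" by (auto simp: subset_eq)
  then show "B \<in> BI"
    unfolding BI_def using sections by blast
qed

text \<open>
  The \<open>BI_proj\<close>-small sets are the members of \<open>BI\<close> whose columns \<open>{(i, j)} \<times> \<omega>\<close> are
  all finite; an arbitrary member of \<open>BI\<close> has only finitely many infinite columns.
\<close>
definition BI_proj :: "nat \<times> nat \<times> nat \<Rightarrow> nat \<times> nat" where
  "BI_proj t = (fst t, fst (snd t))"

definition BI_small :: "('a \<Rightarrow> nat \<times> nat) \<Rightarrow> 'a set \<Rightarrow> bool" where
  "BI_small pi A \<longleftrightarrow>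
     (\<forall>p. finite {x\<in>A. pi x = p}) \<and> finite {i. infinite {x\<in>A. fst (pi x) = i}}"

lemma BI_small_finite: "finite A \<Longrightarrow> BI_small pi A"
  unfolding BI_small_def by simp

lemma BI_small_subset:
  assumes "BI_small pi A" "B \<subseteq> A"
  shows "BI_small pi B"
proof -
  have sub: "{x\<in>B. P x} \<subseteq> {x\<in>A. P x}" for P using assms(2) by blast
  have "finite {x\<in>B. pi x = p}" for p
    using assms(1) sub[of "\<lambda>x. pi x = p"] unfolding BI_small_def by (blast intro: finite_subset)
  moreover have "{i. infinite {x\<in>B. fst (pi x) = i}} \<subseteq> {i. infinite {x\<in>A. fst (pi x) = i}}"
    using sub[of "\<lambda>x. fst (pi x) = _"] by (auto dest: finite_subset)
  ultimately show ?thesis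
    using assms(1) unfolding BI_small_def by (meson finite_subset)
qed

lemma BI_small_image:
  assumes "BI_small (g \<circ> f) A"
  shows "BI_small g (f ` A)"
proof -
  have image_eq: "{t\<in>f ` A. P t} = f ` {x\<in>A. P (f x)}" for P by blast
  have "{i. infinite {t\<in>f ` A. fst (g t) = i}} \<subseteq> {i. infinite {x\<in>A. fst (g (f x)) = i}}"
    unfolding image_eq by auto
  then show ?thesis
    using assms unfolding BI_small_def image_eq by (auto intro: finite_subset)
qed

lemma BI_small_inj_image:
  assumes "inj_on f A" "BI_small g (f ` A)"
  shows "BI_small (g \<circ> f) A"
proof -
  have "finite {t\<in>f ` A. P t} \<longleftrightarrow> finite {x\<in>A. P (f x)}" for P
  proof -
    have "{t\<in>f ` A. P t} = f ` {x\<in>A. P (f x)}" by blast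
    moreover have "inj_on f {x\<in>A. P (f x)}" using assms(1) by (rule inj_on_subset) blast
    ultimately show ?thesis by (simp add: finite_image_iff)
  qed
  then show ?thesis using assms(2) unfolding BI_small_def by simp
qed

lemma BI_small_BI_proj_in_BI:
  assumes "BI_small BI_proj B"
  shows "B \<in> BI"
proof -
  have section_eq: "{(j, l). (i, j, l) \<in> B} = snd ` {t\<in>B. fst t = i}" for i
    by force
  have "{l. (i, n, l) \<in> B} = snd ` snd ` {t\<in>B. BI_proj t = (i, n)}" for i n
    by (force simp: BI_proj_def)
  then have "finite {l. (i, n, l) \<in> B}" for i n
    using assms unfolding BI_small_def by simp
  then have "{(j, l). (i, j, l) \<in> B} \<in> Fin2" for i
    unfolding Fin2_def by simp
  moreover have "{i. infinite {(j, l). (i, j, l) \<in> B}} \<subseteq> {i. infinite {t\<in>B. fst (BI_proj t) = i}}"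
    unfolding section_eq by (auto simp: BI_proj_def)
  ultimately show ?thesis
    using assms unfolding mem_BI_iff BI_small_def by (blast intro: finite_subset)
qed

lemma finite_in_BI: "finite B \<Longrightarrow> B \<in> BI"
  by (simp add: BI_small_BI_proj_in_BI BI_small_finite)

lemma Union_BI: "\<Union>BI = UNIV"
  using finite_in_BI[of "{t}" for t] by blast

lemma BI_proj_fiber_in_BI: "BI_proj -` {p} \<in> BI"
proof -
  obtain i j where p: "p = (i, j)" by fastforce
  have "{n. infinite {m. (n, m) \<in> {(j', l). (i', j', l) \<in> BI_proj -` {p}}}} \<subseteq> {j}" for i'
    by (auto simp: p BI_proj_def)
  then have "{(j', l). (i', j', l) \<in> BI_proj -` {p}} \<in> Fin2" for i'
    unfolding Fin2_def mem_Collect_eq by (rule finite_subset) simp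
  moreover have "{i'. infinite {(j', l). (i', j', l) \<in> BI_proj -` {p}}} \<subseteq> {i}"
    by (auto simp: p BI_proj_def)
  ultimately show ?thesis
    unfolding mem_BI_iff by (blast intro: finite_subset)
qed

lemma finite_infinite_BI_proj_fibers:
  assumes "B \<in> BI"
  shows "finite {p. infinite {t\<in>B. BI_proj t = p}}"
proof -
  let ?sec = "\<lambda>i. {(j, l). (i, j, l) \<in> B}"
  have "{p. infinite {t\<in>B. BI_proj t = p}}
      \<subseteq> Sigma {i. infinite (?sec i)} (\<lambda>i. {n. infinite {m. (n, m) \<in> ?sec i}})"
  proof
    fix p assume "p \<in> {p. infinite {t\<in>B. BI_proj t = p}}"
    moreover obtain i j where p: "p = (i, j)" by fastforce
    ultimately have fiber: "infinite {t\<in>B. BI_proj t = (i, j)}" by simp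
    have "{t\<in>B. BI_proj t = (i, j)} = Pair i ` Pair j ` {l. (i, j, l) \<in> B}"
      by (auto simp: BI_proj_def)
    with fiber have column: "infinite {l. (i, j, l) \<in> B}" by auto
    then have "infinite (Pair j ` {l. (i, j, l) \<in> B})" by (auto dest: finite_imageD simp: inj_on_def)
    moreover have "Pair j ` {l. (i, j, l) \<in> B} \<subseteq> ?sec i" by auto
    ultimately have "infinite (?sec i)" by (auto dest: finite_subset)
    with column show "p \<in> Sigma {i. infinite (?sec i)} (\<lambda>i. {n. infinite {m. (n, m) \<in> ?sec i}})"
      by (simp add: p)
  qed
  moreover have "finite (Sigma {i. infinite (?sec i)} (\<lambda>i. {n. infinite {m. (n, m) \<in> ?sec i}}))"
    using assms unfolding mem_BI_iff Fin2_def by (intro finite_SigmaI) auto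
  ultimately show ?thesis by (rule finite_subset)
qed

lemma BI_small_off_infinite_fibers:
  assumes "B \<in> BI"
  shows "BI_small BI_proj {t\<in>B. finite {s\<in>B. BI_proj s = BI_proj t}}"
proof -
  let ?B' = "{t\<in>B. finite {s\<in>B. BI_proj s = BI_proj t}}"
  have "finite {t\<in>?B'. BI_proj t = p}" for p
    by (cases "finite {s\<in>B. BI_proj s = p}") (auto intro: rev_finite_subset)
  moreover have "{t\<in>?B'. fst (BI_proj t) = i} \<subseteq> Pair i ` {(j, l). (i, j, l) \<in> B}" for i
    by (force simp: BI_proj_def)
  then have "{i. infinite {t\<in>?B'. fst (BI_proj t) = i}} \<subseteq> {i. infinite {(j, l). (i, j, l) \<in> B}}"
    by (auto dest: finite_subset)
  ultimately show ?thesis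
    using assms unfolding mem_BI_iff BI_small_def by (blast intro: finite_subset)
qed

section \<open>Katetov reductions\<close>

lemma katetov_witness_reflects:
  assumes "is_ideal J" "katetov_witness f I J" "A \<subseteq> \<Union>J" "f ` A \<in> I"
  shows "A \<in> J"
proof -
  have "{x\<in>\<Union>J. f x \<in> f ` A} \<in> J" using assms(2,4) unfolding katetov_witness_def by blast
  moreover have "A \<subseteq> {x\<in>\<Union>J. f x \<in> f ` A}" using assms(3) by blast
  ultimately show ?thesis using ideal_subset[OF assms(1)] by blast
qed

lemma katetov_blass_le_if_inj_witness:
  assumes "katetov_witness f I J" "inj_on f (\<Union>J)"
  shows "katetov_blass_le I J"
proof -
  have "finite {x\<in>\<Union>J. f x = y}" for y
    using finite_vimage_IntI[of "{y}" f "\<Union>J"] assms(2) by (simp add: vimage_def Int_def conj_commute)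
  then show ?thesis unfolding katetov_blass_le_def using assms(1) by blast
qed

text \<open>
  Outside an infinite \<open>Y \<in> J\<close> keep the injective witness \<open>f\<close>; on \<open>Y\<close> use a bijection onto
  the (countably infinite) part of \<open>\<Union>I\<close> missed by the rest. Preimages grow by at most \<open>Y\<close>.
\<close>
lemma bij_katetov_le_if_inj_witness:
  assumes J: "is_ideal J" and f: "katetov_witness f I J" "inj_on f (\<Union>J)"
    and "countable (\<Union>I)" and Y: "Y \<in> J" "infinite Y"
  shows "bij_katetov_le I J"
proof -
  let ?U = "\<Union>J"
  define V where "V = \<Union>I - f ` (?U - Y)"
  have YU: "Y \<subseteq> ?U" using Y by blast
  have fU: "f ` ?U \<subseteq> \<Union>I" using f(1) unfolding katetov_witness_def by blast
  have "f ` Y \<subseteq> V"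
  proof
    fix t assume "t \<in> f ` Y"
    then obtain y where y: "y \<in> Y" "t = f y" by blast
    then have "t \<notin> f ` (?U - Y)" using YU inj_onD[OF f(2)] by fastforce
    with y show "t \<in> V" using YU fU unfolding V_def by blast
  qed
  moreover have "infinite (f ` Y)"
    using Y(2) inj_on_subset[OF f(2) YU] by (simp add: finite_image_iff)
  ultimately have "infinite V" using finite_subset by blast
  moreover have "countable V" using \<open>countable (\<Union>I)\<close> unfolding V_def by simp
  moreover have "countable Y" using countable_subset[OF YU ideal_countable_Union[OF J]] .
  ultimately obtain k where k: "bij_betw k Y V"
    using bij_betw_trans[OF to_nat_on_infinite bij_betw_from_nat_into] Y(2) by blast
  define h where "h x = (if x \<in> Y then k x else f x)" for x
  have "bij_betw f (?U - Y) (f ` (?U - Y))"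
    using inj_on_subset[OF f(2)] by (intro bij_betw_imageI) auto
  then have "bij_betw h (?U - Y) (f ` (?U - Y))"
    by (rule bij_betw_cong[THEN iffD1, rotated]) (simp add: h_def)
  moreover have "bij_betw h Y V"
    using k by (rule bij_betw_cong[THEN iffD1, rotated]) (simp add: h_def)
  ultimately have "bij_betw h ((?U - Y) \<union> Y) (f ` (?U - Y) \<union> V)"
    by (rule bij_betw_combine) (auto simp: V_def)
  moreover have "(?U - Y) \<union> Y = ?U" "f ` (?U - Y) \<union> V = \<Union>I"
    using YU fU unfolding V_def by blast+
  ultimately have bij: "bij_betw h ?U (\<Union>I)" by simp
  have "{x\<in>?U. h x \<in> A} \<in> J" if "A \<in> I" for A
  proof -
    have "{x\<in>?U. f x \<in> A} \<union> Y \<in> J"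
      using f(1) that ideal_Un[OF J _ Y(1)] unfolding katetov_witness_def by blast
    moreover have "{x\<in>?U. h x \<in> A} \<subseteq> {x\<in>?U. f x \<in> A} \<union> Y" unfolding h_def by auto
    ultimately show ?thesis using ideal_subset[OF J] by blast
  qed
  with bij have "katetov_witness h I J"
    unfolding katetov_witness_def by (simp add: bij_betw_def)
  with bij show ?thesis unfolding bij_katetov_le_def by blast
qed

section \<open>Maps reducing BI\<close>

definition BI_reducing_map :: "'a set set \<Rightarrow> ('a \<Rightarrow> nat \<times> nat) \<Rightarrow> bool" where
  "BI_reducing_map I pi \<longleftrightarrow>
     (\<forall>p. {x\<in>\<Union>I. pi x = p} \<in> I) \<and> (\<forall>A. A \<subseteq> \<Union>I \<longrightarrow> BI_small pi A \<longrightarrow> A \<in> I)"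

lemma BI_reducing_map_fiber: "BI_reducing_map I pi \<Longrightarrow> {x\<in>\<Union>I. pi x = p} \<in> I"
  unfolding BI_reducing_map_def by blast

lemma BI_reducing_map_small:
  "BI_reducing_map I pi \<Longrightarrow> A \<subseteq> \<Union>I \<Longrightarrow> BI_small pi A \<Longrightarrow> A \<in> I"
  unfolding BI_reducing_map_def by blast

lemma BI_reducing_map_of_witness:
  assumes "is_ideal I" "katetov_witness f BI I"
  shows "BI_reducing_map I (BI_proj \<circ> f)"
proof -
  have "{x\<in>\<Union>I. f x \<in> BI_proj -` {p}} \<in> I" for p
    using assms(2) BI_proj_fiber_in_BI[of p] unfolding katetov_witness_def by blast
  then have "{x\<in>\<Union>I. (BI_proj \<circ> f) x = p} \<in> I" for p by simp
  moreover have "A \<in> I" if "A \<subseteq> \<Union>I" "BI_small (BI_proj \<circ> f) A" for A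
    using BI_small_BI_proj_in_BI[OF BI_small_image[OF that(2)]]
    by (rule katetov_witness_reflects[OF assms that(1)])
  ultimately show ?thesis unfolding BI_reducing_map_def by blast
qed

lemma inj_witness_of_BI_reducing_map:
  assumes I: "is_ideal I" and pi: "BI_reducing_map I pi"
  defines "f \<equiv> \<lambda>x. (fst (pi x), snd (pi x), to_nat_on (\<Union>I) x)"
  shows "katetov_witness f BI I" and "inj_on f (\<Union>I)"
proof -
  have "inj_on (to_nat_on (\<Union>I)) (\<Union>I)" using ideal_countable_Union[OF I] by blast
  then show inj: "inj_on f (\<Union>I)" unfolding f_def inj_on_def by auto
  have proj: "BI_proj \<circ> f = pi" by (simp add: fun_eq_iff f_def BI_proj_def)
  have "{x\<in>\<Union>I. f x \<in> B} \<in> I" if "B \<in> BI" for B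
  proof -
    define F where "F = {p. infinite {t\<in>B. BI_proj t = p}}"
    define A where "A = {x\<in>\<Union>I. f x \<in> B \<and> pi x \<notin> F}"
    have "f ` A \<subseteq> {t\<in>B. finite {s\<in>B. BI_proj s = BI_proj t}}"
      using proj by (auto simp: A_def F_def fun_eq_iff)
    then have "BI_small BI_proj (f ` A)"
      by (rule BI_small_subset[OF BI_small_off_infinite_fibers[OF that]])
    moreover have "inj_on f A" using inj by (rule inj_on_subset) (auto simp: A_def)
    ultimately have "BI_small pi A" unfolding proj[symmetric] by (rule BI_small_inj_image[rotated])
    moreover have "A \<subseteq> \<Union>I" unfolding A_def by blast
    ultimately have "A \<in> I" by (rule BI_reducing_map_small[OF pi, rotated])
    moreover have "(\<Union>p\<in>F. {x\<in>\<Union>I. pi x = p}) \<in> I"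
      unfolding F_def
      by (intro ideal_UN_finite[OF I finite_infinite_BI_proj_fibers[OF that]] BI_reducing_map_fiber[OF pi])
    moreover have "{x\<in>\<Union>I. f x \<in> B} \<subseteq> (\<Union>p\<in>F. {x\<in>\<Union>I. pi x = p}) \<union> A"
      by (auto simp: A_def)
    ultimately show ?thesis using ideal_subset[OF I] ideal_Un[OF I] by blast
  qed
  then show "katetov_witness f BI I" unfolding katetov_witness_def Union_BI by blast
qed

lemma BI_reducing_map_imp_infinite_member:
  assumes I: "is_ideal I" and pi: "BI_reducing_map I pi"
  shows "\<exists>Y\<in>I. infinite Y"
proof (rule ccontr)
  assume "\<not> (\<exists>Y\<in>I. infinite Y)"
  then have fin: "Y \<in> I \<Longrightarrow> finite Y" for Y by blast
  have fibers: "finite {x\<in>A. pi x = p}" if "A \<subseteq> \<Union>I" for A p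
  proof -
    have "finite {x\<in>\<Union>I. pi x = p}" by (rule fin[OF BI_reducing_map_fiber[OF pi]])
    then show ?thesis by (rule rev_finite_subset) (use that in blast)
  qed
  have "finite {x\<in>\<Union>I. fst (pi x) = i}" for i
  proof -
    let ?R = "{x\<in>\<Union>I. fst (pi x) = i}"
    have "{x\<in>?R. fst (pi x) = i'} = (if i' = i then ?R else {})" for i' by auto
    then have "{i'. infinite {x\<in>?R. fst (pi x) = i'}} \<subseteq> {i}" by auto
    then have "BI_small pi ?R"
      using fibers[of ?R] finite_subset unfolding BI_small_def by blast
    then show ?thesis by (intro fin BI_reducing_map_small[OF pi]) auto
  qed
  then have "BI_small pi (\<Union>I)" using fibers[OF subset_refl] unfolding BI_small_def by simp
  then have "\<Union>I \<in> I" by (rule BI_reducing_map_small[OF pi subset_refl])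
  with ideal_Union_notin[OF I] show False by contradiction
qed

lemma katetov_le_BI_iff: "is_ideal I \<Longrightarrow> katetov_le BI I \<longleftrightarrow> (\<exists>pi. BI_reducing_map I pi)"
  unfolding katetov_le_def
  using BI_reducing_map_of_witness inj_witness_of_BI_reducing_map(1) by blast

lemma katetov_blass_le_BI_iff:
  assumes I: "is_ideal I"
  shows "katetov_blass_le BI I \<longleftrightarrow> katetov_le BI I"
proof
  show "katetov_blass_le BI I \<Longrightarrow> katetov_le BI I"
    unfolding katetov_blass_le_def katetov_le_def by blast
next
  assume "katetov_le BI I"
  then obtain pi where pi: "BI_reducing_map I pi" using katetov_le_BI_iff[OF I] by blast
  show "katetov_blass_le BI I"
    by (rule katetov_blass_le_if_inj_witness[OF inj_witness_of_BI_reducing_map[OF I pi]])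
qed

lemma bij_katetov_le_BI_iff:
  assumes I: "is_ideal I"
  shows "bij_katetov_le BI I \<longleftrightarrow> katetov_le BI I"
proof
  show "bij_katetov_le BI I \<Longrightarrow> katetov_le BI I"
    unfolding bij_katetov_le_def katetov_le_def by blast
next
  assume "katetov_le BI I"
  then obtain pi where pi: "BI_reducing_map I pi" using katetov_le_BI_iff[OF I] by blast
  obtain Y where "Y \<in> I" "infinite Y" using BI_reducing_map_imp_infinite_member[OF I pi] by blast
  moreover have "countable (\<Union>BI)" by (simp add: Union_BI)
  ultimately show "bij_katetov_le BI I"
    using bij_katetov_le_if_inj_witness[OF I inj_witness_of_BI_reducing_map[OF I pi]] by blast
qed

section \<open>Reformulations by partitions and by maps\<close>

lemma BI_small_iff_partition:
  assumes "A \<subseteq> U" and fibers: "\<And>p. {x\<in>U. pi x = p} = X p"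
  shows "BI_small pi A \<longleftrightarrow> (\<forall>p. finite (A \<inter> X p)) \<and> finite {i. infinite (A \<inter> (\<Union>j. X (i, j)))}"
proof -
  have "A \<inter> X p = {x\<in>A. pi x = p}" for p
    using assms(1) unfolding fibers[symmetric] by blast
  moreover have "A \<inter> (\<Union>j. X (i, j)) = {x\<in>A. fst (pi x) = i}" for i
    using assms(1) unfolding fibers[symmetric] by (auto simp: prod_eq_iff)
  ultimately show ?thesis unfolding BI_small_def by simp
qed

lemma partition_index_fiber:
  assumes "(\<Union>p. X p) = U" "\<forall>p q. p \<noteq> q \<longrightarrow> X p \<inter> X q = {}"
  shows "{x\<in>U. (SOME p. x \<in> X p) = p} = X p"
proof -
  have "(SOME q. x \<in> X q) = p" if "x \<in> X p" for x
    using someI[of "\<lambda>q. x \<in> X q", OF that] that assms(2) by blast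
  then show ?thesis using assms(1) by (auto intro: someI)
qed

lemma no_BI_reducing_map_iff_partitions:
  "(\<nexists>pi. BI_reducing_map I pi) \<longleftrightarrow>
     (\<forall>X :: nat \<times> nat \<Rightarrow> 'a set.
        ((\<forall>p. X p \<in> I) \<and> (\<Union>p. X p) = \<Union>I \<and> (\<forall>p q. p \<noteq> q \<longrightarrow> X p \<inter> X q = {}))
        \<longrightarrow> (\<exists>A. A \<subseteq> \<Union>I \<and> A \<notin> I \<and> (\<forall>p. finite (A \<inter> X p)) \<and>
               finite {i. infinite (A \<inter> (\<Union>j. X (i, j)))}))"
proof (intro iffI allI impI)
  fix X :: "nat \<times> nat \<Rightarrow> 'a set"
  assume none: "\<nexists>pi. BI_reducing_map I pi"
    and X: "(\<forall>p. X p \<in> I) \<and> (\<Union>p. X p) = \<Union>I \<and> (\<forall>p q. p \<noteq> q \<longrightarrow> X p \<inter> X q = {})"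
  define pi where "pi x = (SOME p. x \<in> X p)" for x
  have fibers: "{x\<in>\<Union>I. pi x = p} = X p" for p
    unfolding pi_def using X by (intro partition_index_fiber) auto
  then have "\<forall>p. {x\<in>\<Union>I. pi x = p} \<in> I" using X by simp
  moreover have "\<not> BI_reducing_map I pi" using none by blast
  ultimately obtain A where "A \<subseteq> \<Union>I" "BI_small pi A" "A \<notin> I"
    unfolding BI_reducing_map_def by blast
  then show "\<exists>A. A \<subseteq> \<Union>I \<and> A \<notin> I \<and> (\<forall>p. finite (A \<inter> X p)) \<and>
               finite {i. infinite (A \<inter> (\<Union>j. X (i, j)))}"
    using BI_small_iff_partition[OF _ fibers] by blast
next
  assume partitions: "\<forall>X :: nat \<times> nat \<Rightarrow> 'a set.
        ((\<forall>p. X p \<in> I) \<and> (\<Union>p. X p) = \<Union>I \<and> (\<forall>p q. p \<noteq> q \<longrightarrow> X p \<inter> X q = {}))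
        \<longrightarrow> (\<exists>A. A \<subseteq> \<Union>I \<and> A \<notin> I \<and> (\<forall>p. finite (A \<inter> X p)) \<and>
               finite {i. infinite (A \<inter> (\<Union>j. X (i, j)))})"
  show "\<nexists>pi. BI_reducing_map I pi"
  proof
    assume "\<exists>pi. BI_reducing_map I pi"
    then obtain pi where pi: "BI_reducing_map I pi" by blast
    define X where "X p = {x\<in>\<Union>I. pi x = p}" for p
    have "(\<forall>p. X p \<in> I) \<and> (\<Union>p. X p) = \<Union>I \<and> (\<forall>p q. p \<noteq> q \<longrightarrow> X p \<inter> X q = {})"
      unfolding X_def using BI_reducing_map_fiber[OF pi] by auto
    from partitions[rule_format, OF this] obtain A where A: "A \<subseteq> \<Union>I" "A \<notin> I"
      and "(\<forall>p. finite (A \<inter> X p)) \<and> finite {i. infinite (A \<inter> (\<Union>j. X (i, j)))}"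
      by blast
    then have "BI_small pi A" using BI_small_iff_partition[OF A(1), of pi X] X_def by blast
    with A show False using BI_reducing_map_small[OF pi] by blast
  qed
qed

lemma BI_small_iff_image_in_Fin2:
  assumes fibers: "\<And>p. finite {x\<in>A. f x = p}"
  shows "BI_small f A \<longleftrightarrow> f ` A \<in> Fin2"
proof -
  have "finite {x\<in>A. fst (f x) = i} \<longleftrightarrow> finite {m. (i, m) \<in> f ` A}" for i
  proof
    assume "finite {x\<in>A. fst (f x) = i}"
    moreover have "{m. (i, m) \<in> f ` A} \<subseteq> snd ` f ` {x\<in>A. fst (f x) = i}"
    proof
      fix m assume "m \<in> {m. (i, m) \<in> f ` A}"
      then obtain x where "x \<in> A" "f x = (i, m)" by (auto simp: image_iff)
      then show "m \<in> snd ` f ` {x\<in>A. fst (f x) = i}" by (metis (mono_tags) fst_conv snd_conv image_eqI mem_Collect_eq)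
    qed
    ultimately show "finite {m. (i, m) \<in> f ` A}" by (simp add: finite_subset)
  next
    assume "finite {m. (i, m) \<in> f ` A}"
    moreover have "{x\<in>A. fst (f x) = i} = (\<Union>m\<in>{m. (i, m) \<in> f ` A}. {x\<in>A. f x = (i, m)})"
      by (rule set_eqI) (force simp: prod_eq_iff)
    ultimately show "finite {x\<in>A. fst (f x) = i}" using fibers by simp
  qed
  then show ?thesis using fibers unfolding BI_small_def Fin2_def by simp
qed

lemma no_BI_reducing_map_iff_maps:
  assumes I: "is_ideal I"
  shows "(\<nexists>pi. BI_reducing_map I pi) \<longleftrightarrow>
     (\<forall>f :: 'a \<Rightarrow> nat \<times> nat.
        \<exists>A. A \<subseteq> \<Union>I \<and> A \<notin> I \<and> f ` A \<in> Fin2 \<and>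
            ((\<exists>c. \<forall>x\<in>A. f x = c) \<or> (\<forall>y. finite {x \<in> A. f x = y})))"
proof (intro iffI allI)
  fix f :: "'a \<Rightarrow> nat \<times> nat"
  assume "\<nexists>pi. BI_reducing_map I pi"
  then have "\<not> BI_reducing_map I f" by blast
  then consider p where "{x\<in>\<Union>I. f x = p} \<notin> I"
    | A where "A \<subseteq> \<Union>I" "BI_small f A" "A \<notin> I"
    unfolding BI_reducing_map_def by blast
  then show "\<exists>A. A \<subseteq> \<Union>I \<and> A \<notin> I \<and> f ` A \<in> Fin2 \<and>
            ((\<exists>c. \<forall>x\<in>A. f x = c) \<or> (\<forall>y. finite {x \<in> A. f x = y}))"
  proof cases
    case (1 p)
    let ?A = "{x\<in>\<Union>I. f x = p}"
    have "f ` ?A \<in> Fin2"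
      by (rule finite_in_Fin2) (rule finite_subset[of _ "{p}"], auto)
    with 1 show ?thesis by (intro exI[of _ ?A]) auto
  next
    case (2 A)
    then have "\<forall>y. finite {x\<in>A. f x = y}" unfolding BI_small_def by blast
    with 2 show ?thesis using BI_small_iff_image_in_Fin2 by blast
  qed
next
  assume maps: "\<forall>f :: 'a \<Rightarrow> nat \<times> nat.
        \<exists>A. A \<subseteq> \<Union>I \<and> A \<notin> I \<and> f ` A \<in> Fin2 \<and>
            ((\<exists>c. \<forall>x\<in>A. f x = c) \<or> (\<forall>y. finite {x \<in> A. f x = y}))"
  show "\<nexists>pi. BI_reducing_map I pi"
  proof
    assume "\<exists>pi. BI_reducing_map I pi"
    then obtain pi where pi: "BI_reducing_map I pi" by blast
    obtain A where A: "A \<subseteq> \<Union>I" "A \<notin> I" "pi ` A \<in> Fin2"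
      and "(\<exists>c. \<forall>x\<in>A. pi x = c) \<or> (\<forall>y. finite {x \<in> A. pi x = y})"
      using spec[OF maps, of pi] by blast
    from this(4) show False
    proof
      assume "\<exists>c. \<forall>x\<in>A. pi x = c"
      then obtain c where "A \<subseteq> {x\<in>\<Union>I. pi x = c}" using A(1) by blast
      with A(2) show False using ideal_subset[OF I BI_reducing_map_fiber[OF pi]] by blast
    next
      assume "\<forall>y. finite {x \<in> A. pi x = y}"
      then have "BI_small pi A" using A(3) BI_small_iff_image_in_Fin2 by blast
      with A show False using BI_reducing_map_small[OF pi] by blast
    qed
  qed
qed

theorem proposition4p4:
  fixes I :: "'a set set"
  assumes "is_ideal I"
  shows "(\<not> katetov_le BI I \<longleftrightarrow> \<not> katetov_blass_le BI I)
       \<and> (\<not> katetov_le BI I \<longleftrightarrow> \<not> bij_katetov_le BI I)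
       \<and> (\<not> katetov_le BI I \<longleftrightarrow>
            (\<forall>X :: nat \<times> nat \<Rightarrow> 'a set.
               ((\<forall>p. X p \<in> I) \<and> (\<Union>p. X p) = \<Union>I \<and>
                (\<forall>p q. p \<noteq> q \<longrightarrow> X p \<inter> X q = {}))
               \<longrightarrow> (\<exists>A. A \<subseteq> \<Union>I \<and> A \<notin> I \<and>
                      (\<forall>p. finite (A \<inter> X p)) \<and>
                      finite {i. infinite (A \<inter> (\<Union>j. X (i, j)))})))
       \<and> (\<not> katetov_le BI I \<longleftrightarrow>
            (\<forall>f :: 'a \<Rightarrow> nat \<times> nat.
               \<exists>A. A \<subseteq> \<Union>I \<and> A \<notin> I \<and> f ` A \<in> Fin2 \<and>
                   ((\<exists>c. \<forall>x\<in>A. f x = c) \<or> (\<forall>y. finite {x \<in> A. f x = y}))))"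
  unfolding katetov_blass_le_BI_iff[OF assms] bij_katetov_le_BI_iff[OF assms]
    katetov_le_BI_iff[OF assms]
    no_BI_reducing_map_iff_partitions[symmetric] no_BI_reducing_map_iff_maps[OF assms, symmetric]
  by simp

end
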